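(* Let $\mathbf{a}$ be a CSCA and let $\xi\in\mathcal{P}^2$ be reflection invariant (both entries in $\mathcal{R}$) with $\gcd(\xi_+,\xi_-)=1$. For $t\in\mathbb{N}$ let $n(t,\xi)=\deg(\mathbf{a}^t\xi)$, so that the stabilizer generator $W(\mathbf{a}^t\xi)$ has length $2n(t,\xi)+1$. Then $$\lim_{t\to\infty}\frac{1}{t}n(t,\xi)=\deg(\mathrm{tr}\,\mathbf{a}).$$
   Context: $\mathcal{P}$ = Laurent polynomials in $u$ over $\mathbb{Z}_2$, $\mathcal{R}$ its subring of palindromes ($p(u^{-1})=p(u)$). A CSCA is a $2\times2$ matrix over $\mathcal{R}$ with determinant $1$. For a palindrome $p\in\mathcal{R}$, $\deg p$ is the highest exponent of $u$ occurring in $p$ (with $\deg p=0$ for constants, including $0$); for a vector of palindromes, $\deg$ is the maximum of the degrees of its entries. $W(\xi)$ denotes the tensor product of Pauli matrices labelled by $\xi$ (site $x$ carries $W(\xi_+(x),\xi_-(x))$ with $W(1,0)=\sigma_1$, $W(0,1)=\sigma_3$, $W(1,1)\propto\sigma_2$, $W(0,0)=\mathbb{1}$). *)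

theory Defs
  imports Complex_Main
begin

text \<open>A Laurent polynomial in u over Z_2 is represented by its (finite) support:
  the finite set of exponents n with coefficient 1.  Addition in Z_2 is symmetric
  difference; multiplication is convolution mod 2.\<close>

type_synonym lpoly = "int set"

definition lp_wf :: "lpoly \<Rightarrow> bool" where
  "lp_wf p \<longleftrightarrow> finite p"

definition lp_zero :: lpoly where "lp_zero = {}"
definition lp_one :: lpoly where "lp_one = {0}"

definition lp_add :: "lpoly \<Rightarrow> lpoly \<Rightarrow> lpoly" where
  "lp_add p q = (p - q) \<union> (q - p)"

definition lp_mult :: "lpoly \<Rightarrow> lpoly \<Rightarrow> lpoly" where
  "lp_mult p q = {n. odd (card {i \<in> p. n - i \<in> q})}"

text \<open>Palindromes: p(u^{-1}) = p(u).\<close>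
definition palindrome :: "lpoly \<Rightarrow> bool" where
  "palindrome p \<longleftrightarrow> finite p \<and> (\<forall>n. n \<in> p \<longleftrightarrow> - n \<in> p)"

text \<open>Degree: highest exponent (0 for constants and for 0).\<close>
definition pdeg :: "lpoly \<Rightarrow> nat" where
  "pdeg p = (if p = {} then 0 else nat (Max p))"

definition vdeg :: "lpoly \<times> lpoly \<Rightarrow> nat" where
  "vdeg v = max (pdeg (fst v)) (pdeg (snd v))"

definition lp_dvd :: "lpoly \<Rightarrow> lpoly \<Rightarrow> bool" where
  "lp_dvd d p \<longleftrightarrow> (\<exists>c. finite c \<and> lp_mult d c = p)"

definition lp_gcd_one :: "lpoly \<Rightarrow> lpoly \<Rightarrow> bool" where
  "lp_gcd_one p q \<longleftrightarrow>
     (\<forall>d. finite d \<and> lp_dvd d p \<and> lp_dvd d q \<longrightarrow> lp_dvd d lp_one)"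

text \<open>2x2 matrices ((a11,a12),(a21,a22)) over Laurent polynomials.\<close>
type_synonym lmat = "(lpoly \<times> lpoly) \<times> (lpoly \<times> lpoly)"

definition mat_apply :: "lmat \<Rightarrow> lpoly \<times> lpoly \<Rightarrow> lpoly \<times> lpoly" where
  "mat_apply a v =
     (lp_add (lp_mult (fst (fst a)) (fst v)) (lp_mult (snd (fst a)) (snd v)),
      lp_add (lp_mult (fst (snd a)) (fst v)) (lp_mult (snd (snd a)) (snd v)))"

definition mat_det :: "lmat \<Rightarrow> lpoly" where
  "mat_det a = lp_add (lp_mult (fst (fst a)) (snd (snd a)))
                      (lp_mult (snd (fst a)) (fst (snd a)))"

definition mat_tr :: "lmat \<Rightarrow> lpoly" where
  "mat_tr a = lp_add (fst (fst a)) (snd (snd a))"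

definition CSCA :: "lmat \<Rightarrow> bool" where
  "CSCA a \<longleftrightarrow> palindrome (fst (fst a)) \<and> palindrome (snd (fst a)) \<and>
              palindrome (fst (snd a)) \<and> palindrome (snd (snd a)) \<and>
              mat_det a = lp_one"

end

theory Submission
  imports Defs "HOL-Library.Poly_Mapping" "HOL-Library.Z2"
begin

text \<open>
  Cayley-Hamilton for a matrix of determinant 1 in characteristic 2 shows that the orbit
  v(t) = a^t xi satisfies v(t+2) = tr(a) v(t+1) + v(t), which can equally be read backwards as
  v(t) = tr(a) v(t+1) + v(t+2). A nonzero palindrome has its top coefficient at u^d, d its degree,
  so degrees add under multiplication of palindromes, and a sum of two palindromic vectors of
  different degrees has the larger degree. Hence, for m = deg tr(a) > 0, once the degree sequence
  increases it grows by exactly m at every later step, and the backward recurrence shows that it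
  cannot decrease forever. For m = 0 the degrees stay bounded. Coprimality of the entries of xi
  is needed only to exclude xi = 0.
\<close>

section \<open>Laurent polynomials as a ring\<close>

text \<open>Identifying a finite support with an element of the group ring \<open>bit[\<int>]\<close> makes the
  ring laws, and with them Cayley-Hamilton, available to \<open>algebra_simps\<close>.\<close>

definition lp_poly :: "lpoly \<Rightarrow> int \<Rightarrow>\<^sub>0 bit" where
  "lp_poly p = Abs_poly_mapping (\<lambda>n. of_bool (n \<in> p))"

lemma lookup_lp_poly: "finite p \<Longrightarrow> Poly_Mapping.lookup (lp_poly p) n = of_bool (n \<in> p)"
  unfolding lp_poly_def by (simp add: lookup_Abs_poly_mapping)

lemma keys_lp_poly: "finite p \<Longrightarrow> Poly_Mapping.keys (lp_poly p) = p"
  using lookup_not_eq_zero_eq_in_keys[of "lp_poly p"] by (auto simp: lookup_lp_poly)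

lemma lp_poly_inject: "finite p \<Longrightarrow> finite q \<Longrightarrow> lp_poly p = lp_poly q \<Longrightarrow> p = q"
  by (metis keys_lp_poly)

lemma finite_lp_add: "finite p \<Longrightarrow> finite q \<Longrightarrow> finite (lp_add p q)"
  by (simp add: lp_add_def)

lemma lp_mult_subset: "lp_mult p q \<subseteq> (\<lambda>(i, j). i + j) ` (p \<times> q)"
proof
  fix n assume "n \<in> lp_mult p q"
  then have "{i \<in> p. n - i \<in> q} \<noteq> {}"
    unfolding lp_mult_def by (intro notI) simp
  then obtain i where "i \<in> p" "n - i \<in> q" by blast
  then show "n \<in> (\<lambda>(i, j). i + j) ` (p \<times> q)"
    by (auto intro!: image_eqI[where x = "(i, n - i)"])
qed

lemma finite_lp_mult: "finite p \<Longrightarrow> finite q \<Longrightarrow> finite (lp_mult p q)"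
  by (rule finite_subset[OF lp_mult_subset]) auto

lemma lp_mult_empty [simp]: "lp_mult p {} = {}" "lp_mult {} p = {}"
  by (auto simp: lp_mult_def)

lemma not_lp_gcd_one_empty: "\<not> lp_gcd_one {} {}"
proof
  have "lp_dvd {} {}" unfolding lp_dvd_def by auto
  moreover assume "lp_gcd_one {} {}"
  ultimately have "lp_dvd {} lp_one" unfolding lp_gcd_one_def by blast
  then show False unfolding lp_dvd_def lp_one_def by simp
qed

lemma of_nat_bit: "(of_nat k :: bit) = of_bool (odd k)"
  by (induction k) auto

lemma lp_poly_add: "finite p \<Longrightarrow> finite q \<Longrightarrow> lp_poly (lp_add p q) = lp_poly p + lp_poly q"
  by (rule poly_mapping_eqI) (auto simp: lookup_add lookup_lp_poly finite_lp_add lp_add_def)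

lemma lp_poly_mult:
  assumes "finite p" "finite q"
  shows "lp_poly (lp_mult p q) = lp_poly p * lp_poly q"
proof (rule poly_mapping_eqI)
  fix n
  have shift: "Sum_any (\<lambda>j. Poly_Mapping.lookup (lp_poly q) j when n = i + j)
      = Poly_Mapping.lookup (lp_poly q) (n - i)" for i
  proof -
    have "(\<lambda>j. Poly_Mapping.lookup (lp_poly q) j when n = i + j)
        = (\<lambda>j. Poly_Mapping.lookup (lp_poly q) j when j = n - i)"
      by (auto simp: when_def)
    then show ?thesis by (simp only: Sum_any_when_equal)
  qed
  have "Poly_Mapping.lookup (lp_poly p * lp_poly q) n
      = Sum_any (\<lambda>i. Poly_Mapping.lookup (lp_poly p) i * Poly_Mapping.lookup (lp_poly q) (n - i))"
    by (simp add: lookup_mult shift)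
  also have "\<dots> = (\<Sum>i\<in>{i \<in> p. n - i \<in> q}. 1)"
    by (subst Sum_any.expand_superset[where A = "{i \<in> p. n - i \<in> q}"])
      (auto simp: assms lookup_lp_poly)
  also have "\<dots> = of_bool (n \<in> lp_mult p q)"
    by (simp add: of_nat_bit lp_mult_def)
  also have "\<dots> = Poly_Mapping.lookup (lp_poly (lp_mult p q)) n"
    by (simp add: lookup_lp_poly finite_lp_mult assms)
  finally show "Poly_Mapping.lookup (lp_poly (lp_mult p q)) n
      = Poly_Mapping.lookup (lp_poly p * lp_poly q) n" ..
qed

lemma lp_poly_one: "lp_poly lp_one = 1"
  by (rule poly_mapping_eqI) (auto simp: lookup_lp_poly lp_one_def lookup_one when_def)

lemma diff_poly_bit_eq_add: "(f :: 'a \<Rightarrow>\<^sub>0 bit) - g = f + g"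
proof -
  have "- g = g" by (rule poly_mapping_eqI) (simp add: lookup_uminus)
  then show ?thesis by (metis diff_conv_add_uminus)
qed

section \<open>Degrees of palindromes\<close>

lemma palindrome_finite: "palindrome p \<Longrightarrow> finite p"
  by (simp add: palindrome_def)

lemma palindrome_lp_add: "palindrome p \<Longrightarrow> palindrome q \<Longrightarrow> palindrome (lp_add p q)"
  unfolding palindrome_def lp_add_def by auto

lemma card_vimage_uminus: "card (uminus -` A) = card (A :: int set)"
proof (rule card_vimage_inj)
  show "inj (uminus :: int \<Rightarrow> int)" by (rule injI) simp
  show "A \<subseteq> range uminus" by (metis minus_minus rangeI subsetI)
qed

lemma palindrome_lp_mult:
  assumes "palindrome p" "palindrome q"
  shows "palindrome (lp_mult p q)"
proof -
  have "{i \<in> p. - n - i \<in> q} = uminus -` {i \<in> p. n - i \<in> q}" for n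
  proof (intro set_eqI)
    fix i
    have "i \<in> p \<longleftrightarrow> - i \<in> p" "- n - i \<in> q \<longleftrightarrow> n - - i \<in> q"
      using assms unfolding palindrome_def
      by (metis minus_diff_eq diff_minus_eq_add minus_minus add.commute)+
    then show "i \<in> {i \<in> p. - n - i \<in> q} \<longleftrightarrow> i \<in> uminus -` {i \<in> p. n - i \<in> q}"
      by simp
  qed
  then have "n \<in> lp_mult p q \<longleftrightarrow> - n \<in> lp_mult p q" for n
    unfolding lp_mult_def by (simp only: mem_Collect_eq card_vimage_uminus)
  then show ?thesis
    using finite_lp_mult[OF palindrome_finite palindrome_finite, OF assms]
    unfolding palindrome_def by blast
qed

lemma pdeg_empty [simp]: "pdeg {} = 0"
  by (simp add: pdeg_def)

lemma le_pdeg: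
  assumes "finite p" "n \<in> p"
  shows "n \<le> int (pdeg p)"
proof -
  have "n \<le> Max p" using Max_ge[OF assms] .
  then show ?thesis using assms(2) by (auto simp: pdeg_def)
qed

lemma pdeg_leI:
  assumes "finite p" "\<And>n. n \<in> p \<Longrightarrow> n \<le> int k"
  shows "pdeg p \<le> k"
proof (cases "p = {}")
  case False
  then have "Max p \<le> int k" using assms Max_in by blast
  then show ?thesis using False by (simp add: pdeg_def)
qed (simp add: pdeg_def)

lemma pdeg_mem_palindrome:
  assumes "palindrome p" "p \<noteq> {}"
  shows "int (pdeg p) \<in> p"
proof -
  have Max: "finite p" "Max p \<in> p" using assms by (auto simp: palindrome_def)
  then have "- Max p \<in> p" using assms(1) by (simp add: palindrome_def)
  then have "- Max p \<le> Max p" using Max(1) Max_ge by blast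
  then have "int (pdeg p) = Max p" using assms(2) by (simp add: pdeg_def)
  then show ?thesis using Max by simp
qed

lemma pdeg_lp_add_le:
  "finite p \<Longrightarrow> finite q \<Longrightarrow> pdeg (lp_add p q) \<le> max (pdeg p) (pdeg q)"
  by (rule pdeg_leI) (auto simp: finite_lp_add lp_add_def dest!: le_pdeg)

lemma pdeg_lp_add_eq:
  assumes "palindrome p" "palindrome q" "pdeg q < pdeg p"
  shows "pdeg (lp_add p q) = pdeg p"
proof -
  have fin: "finite p" "finite q" using assms palindrome_finite by auto
  have "int (pdeg p) \<in> p" using pdeg_mem_palindrome[OF assms(1)] assms(3) by fastforce
  moreover have "int (pdeg p) \<notin> q" using le_pdeg[OF fin(2)] assms(3) by force
  ultimately have "int (pdeg p) \<in> lp_add p q" by (simp add: lp_add_def)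
  then have "pdeg p \<le> pdeg (lp_add p q)"
    using le_pdeg[OF finite_lp_add[OF fin]] by fastforce
  then show ?thesis using pdeg_lp_add_le[OF fin] assms(3) by linarith
qed

lemma pdeg_lp_mult_le: "finite p \<Longrightarrow> finite q \<Longrightarrow> pdeg (lp_mult p q) \<le> pdeg p + pdeg q"
  by (rule pdeg_leI) (auto simp: finite_lp_mult dest!: subsetD[OF lp_mult_subset] le_pdeg)

text \<open>The top exponent of the product has the single representation \<open>deg p + deg q\<close>,
  because the exponents of a palindrome lie in \<open>[-deg p, deg p]\<close>.\<close>

lemma pdeg_lp_mult:
  assumes "palindrome p" "palindrome q" "p \<noteq> {}" "q \<noteq> {}"
  shows "pdeg (lp_mult p q) = pdeg p + pdeg q"
proof -
  have fin: "finite p" "finite q" using assms palindrome_finite by auto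
  let ?P = "int (pdeg p)" and ?Q = "int (pdeg q)"
  have "{i \<in> p. ?P + ?Q - i \<in> q} = {?P}"
    using pdeg_mem_palindrome[OF assms(1,3)] pdeg_mem_palindrome[OF assms(2,4)]
      le_pdeg[OF fin(1)] le_pdeg[OF fin(2)]
    by (auto; smt (verit))
  then have "?P + ?Q \<in> lp_mult p q" by (simp add: lp_mult_def)
  then have "pdeg p + pdeg q \<le> pdeg (lp_mult p q)"
    using le_pdeg[OF finite_lp_mult[OF fin]] by fastforce
  then show ?thesis using pdeg_lp_mult_le[OF fin] by linarith
qed

section \<open>Palindromic vectors\<close>

definition vfinite :: "lpoly \<times> lpoly \<Rightarrow> bool" where
  "vfinite v \<longleftrightarrow> finite (fst v) \<and> finite (snd v)"

definition vpalindrome :: "lpoly \<times> lpoly \<Rightarrow> bool" where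
  "vpalindrome v \<longleftrightarrow> palindrome (fst v) \<and> palindrome (snd v)"

definition vadd :: "lpoly \<times> lpoly \<Rightarrow> lpoly \<times> lpoly \<Rightarrow> lpoly \<times> lpoly" where
  "vadd v w = (lp_add (fst v) (fst w), lp_add (snd v) (snd w))"

definition vsmult :: "lpoly \<Rightarrow> lpoly \<times> lpoly \<Rightarrow> lpoly \<times> lpoly" where
  "vsmult c v = (lp_mult c (fst v), lp_mult c (snd v))"

lemma vpalindrome_vfinite: "vpalindrome v \<Longrightarrow> vfinite v"
  by (simp add: vpalindrome_def vfinite_def palindrome_finite)

lemma vpalindrome_vsmult: "palindrome c \<Longrightarrow> vpalindrome v \<Longrightarrow> vpalindrome (vsmult c v)"
  by (simp add: vpalindrome_def vsmult_def palindrome_lp_mult)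

lemma vadd_zero_left [simp]: "vadd ({}, {}) v = v"
  by (simp add: vadd_def lp_add_def)

lemma vsmult_zero [simp]: "vsmult c ({}, {}) = ({}, {})"
  by (simp add: vsmult_def)

lemma vadd_eq_iff_eq_vadd: "vadd u v = w \<longleftrightarrow> v = vadd u w"
  unfolding vadd_def lp_add_def by (cases u; cases v; cases w) auto

lemma vdeg_vadd_le:
  assumes "vfinite v" "vfinite w"
  shows "vdeg (vadd v w) \<le> max (vdeg v) (vdeg w)"
  using pdeg_lp_add_le[of "fst v" "fst w"] pdeg_lp_add_le[of "snd v" "snd w"] assms
  by (auto simp: vdeg_def vadd_def vfinite_def)

lemma vdeg_vadd_eq:
  assumes "vpalindrome v" "vpalindrome w" "vdeg w < vdeg v"
  shows "vdeg (vadd v w) = vdeg v"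
proof -
  have "pdeg (fst w) < vdeg v" "pdeg (snd w) < vdeg v" using assms(3) by (auto simp: vdeg_def)
  then have "pdeg (fst (vadd v w)) = vdeg v \<or> pdeg (snd (vadd v w)) = vdeg v"
    using pdeg_lp_add_eq assms(1,2) unfolding vpalindrome_def vadd_def vdeg_def
    by (cases "pdeg (fst v) \<le> pdeg (snd v)") (auto simp: max_def)
  moreover have "vdeg (vadd v w) \<le> vdeg v"
    using vdeg_vadd_le[OF assms(1,2)[THEN vpalindrome_vfinite]] assms(3) by simp
  ultimately show ?thesis by (auto simp: vdeg_def)
qed

lemma vdeg_vsmult_le:
  assumes "finite c" "vfinite v"
  shows "vdeg (vsmult c v) \<le> pdeg c + vdeg v"
  using pdeg_lp_mult_le[of c "fst v"] pdeg_lp_mult_le[of c "snd v"] assms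
  by (auto simp: vdeg_def vsmult_def vfinite_def)

lemma vdeg_vsmult:
  assumes "palindrome c" "c \<noteq> {}" "vpalindrome v" "v \<noteq> ({}, {})"
  shows "vdeg (vsmult c v) = pdeg c + vdeg v"
proof -
  obtain q where q: "q \<in> {fst v, snd v}" "q \<noteq> {}" "pdeg q = vdeg v"
  proof (cases "fst v = {} \<or> (snd v \<noteq> {} \<and> pdeg (fst v) \<le> pdeg (snd v))")
    case True
    moreover from True have "snd v \<noteq> {}" using assms(4) by (cases v) auto
    ultimately show thesis by (intro that[of "snd v"]) (auto simp: vdeg_def)
  next
    case False
    then show thesis by (intro that[of "fst v"]) (auto simp: vdeg_def)
  qed
  have "palindrome q" using q(1) assms(3) by (auto simp: vpalindrome_def)
  then have "pdeg c + vdeg v = pdeg (lp_mult c q)"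
    using pdeg_lp_mult[OF assms(1) _ assms(2) q(2)] q(3) by simp
  also have "\<dots> \<le> vdeg (vsmult c v)" using q(1) by (auto simp: vdeg_def vsmult_def)
  finally have "pdeg c + vdeg v \<le> vdeg (vsmult c v)" .
  moreover have "vdeg (vsmult c v) \<le> pdeg c + vdeg v"
    using vdeg_vsmult_le palindrome_finite vpalindrome_vfinite assms(1,3) by blast
  ultimately show ?thesis by simp
qed

lemma vdeg_vadd_vsmult:
  assumes "palindrome c" "c \<noteq> {}" "vpalindrome v" "v \<noteq> ({}, {})" "vpalindrome w"
    and "vdeg w < pdeg c + vdeg v"
  shows "vdeg (vadd (vsmult c v) w) = pdeg c + vdeg v"
  using vdeg_vadd_eq[OF vpalindrome_vsmult[OF assms(1,3)] assms(5)] vdeg_vsmult[OF assms(1-4)] assms(6)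
  by simp

section \<open>The orbit recurrence\<close>

lemma mat_apply_twice:
  assumes "vfinite (fst a)" "vfinite (snd a)" "mat_det a = lp_one" "vfinite v"
  shows "mat_apply a (mat_apply a v) = vadd (vsmult (mat_tr a) (mat_apply a v)) v"
proof -
  obtain \<alpha> \<beta> \<gamma> \<delta> where a: "a = ((\<alpha>, \<beta>), (\<gamma>, \<delta>))" by (metis prod.collapse)
  obtain x y where v: "v = (x, y)" by fastforce
  have fin: "finite \<alpha>" "finite \<beta>" "finite \<gamma>" "finite \<delta>" "finite x" "finite y"
    using assms by (auto simp: a v vfinite_def)
  let ?A = "lp_poly \<alpha>" and ?B = "lp_poly \<beta>" and ?C = "lp_poly \<gamma>" and ?D = "lp_poly \<delta>"
  let ?X = "lp_poly x" and ?Y = "lp_poly y"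
  have "?A * ?D + ?B * ?C = 1"
    using arg_cong[OF assms(3), of lp_poly] fin
    by (simp add: a mat_det_def lp_poly_add lp_poly_mult finite_lp_mult lp_poly_one)
  then have det: "?B * ?C - ?A * ?D = 1"
    by (simp add: diff_poly_bit_eq_add add.commute)
  have cayley_hamilton:
    "?A * (?A * ?X + ?B * ?Y) + ?B * (?C * ?X + ?D * ?Y)
       = (?A + ?D) * (?A * ?X + ?B * ?Y) + (?B * ?C - ?A * ?D) * ?X"
    "?C * (?A * ?X + ?B * ?Y) + ?D * (?C * ?X + ?D * ?Y)
       = (?A + ?D) * (?C * ?X + ?D * ?Y) + (?B * ?C - ?A * ?D) * ?Y"
    by (simp_all add: algebra_simps)
  show ?thesis
    unfolding a v mat_apply_def vadd_def vsmult_def mat_tr_def prod.inject fst_conv snd_conv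
  proof (intro conjI; rule lp_poly_inject)
  qed (use cayley_hamilton det fin in \<open>simp_all add: lp_poly_add lp_poly_mult finite_lp_add finite_lp_mult\<close>)
qed

lemma CSCA_vfinite_rows: "CSCA a \<Longrightarrow> vfinite (fst a) \<and> vfinite (snd a)"
  by (simp add: CSCA_def vfinite_def palindrome_finite)

lemma palindrome_mat_tr: "CSCA a \<Longrightarrow> palindrome (mat_tr a)"
  by (simp add: CSCA_def mat_tr_def palindrome_lp_add)

lemma vpalindrome_mat_apply: "CSCA a \<Longrightarrow> vpalindrome v \<Longrightarrow> vpalindrome (mat_apply a v)"
  by (simp add: CSCA_def vpalindrome_def mat_apply_def palindrome_lp_add palindrome_lp_mult)

lemma mat_apply_zero [simp]: "mat_apply a ({}, {}) = ({}, {})"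
  by (simp add: mat_apply_def lp_add_def)

lemma mat_apply_eq_zero:
  assumes "CSCA a" "vfinite v" "mat_apply a v = ({}, {})"
  shows "v = ({}, {})"
  using mat_apply_twice[OF CSCA_vfinite_rows[OF assms(1), THEN conjunct1]
      CSCA_vfinite_rows[OF assms(1), THEN conjunct2] _ assms(2)] assms
  by (simp add: CSCA_def)

context
  fixes a :: lmat and v :: "lpoly \<times> lpoly"
  assumes CSCA: "CSCA a" and palindromic: "vpalindrome v"
begin

lemma vpalindrome_orbit: "vpalindrome ((mat_apply a ^^ t) v)"
  by (induction t) (simp_all add: palindromic vpalindrome_mat_apply[OF CSCA])

lemma orbit_nonzero: "v \<noteq> ({}, {}) \<Longrightarrow> (mat_apply a ^^ t) v \<noteq> ({}, {})"
  by (induction t)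
    (auto dest: mat_apply_eq_zero[OF CSCA vpalindrome_orbit[THEN vpalindrome_vfinite]])

lemma orbit_recurrence:
  "(mat_apply a ^^ Suc (Suc t)) v
     = vadd (vsmult (mat_tr a) ((mat_apply a ^^ Suc t) v)) ((mat_apply a ^^ t) v)"
  using mat_apply_twice[of a "(mat_apply a ^^ t) v"] CSCA_vfinite_rows[OF CSCA] CSCA
    vpalindrome_orbit[THEN vpalindrome_vfinite]
  by (simp add: CSCA_def)

lemma orbit_recurrence_backward:
  "(mat_apply a ^^ t) v
     = vadd (vsmult (mat_tr a) ((mat_apply a ^^ Suc t) v)) ((mat_apply a ^^ Suc (Suc t)) v)"
  by (subst vadd_eq_iff_eq_vadd[symmetric]) (rule orbit_recurrence[symmetric])

lemma vdeg_orbit_le: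
  "vdeg ((mat_apply a ^^ Suc (Suc t)) v)
     \<le> max (pdeg (mat_tr a) + vdeg ((mat_apply a ^^ Suc t) v)) (vdeg ((mat_apply a ^^ t) v))"
proof -
  have "vdeg ((mat_apply a ^^ Suc (Suc t)) v)
      \<le> max (vdeg (vsmult (mat_tr a) ((mat_apply a ^^ Suc t) v))) (vdeg ((mat_apply a ^^ t) v))"
    unfolding orbit_recurrence
    by (intro vdeg_vadd_le vpalindrome_vfinite vpalindrome_vsmult vpalindrome_orbit
        palindrome_mat_tr[OF CSCA])
  also have "\<dots> \<le> max (pdeg (mat_tr a) + vdeg ((mat_apply a ^^ Suc t) v)) (vdeg ((mat_apply a ^^ t) v))"
    by (intro max.mono vdeg_vsmult_le palindrome_finite palindrome_mat_tr[OF CSCA]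
        vpalindrome_vfinite vpalindrome_orbit order_refl)
  finally show ?thesis .
qed

lemma vdeg_orbit_forward:
  assumes "v \<noteq> ({}, {})" "mat_tr a \<noteq> {}"
    and "vdeg ((mat_apply a ^^ t) v) < pdeg (mat_tr a) + vdeg ((mat_apply a ^^ Suc t) v)"
  shows "vdeg ((mat_apply a ^^ Suc (Suc t)) v) = pdeg (mat_tr a) + vdeg ((mat_apply a ^^ Suc t) v)"
  unfolding orbit_recurrence
  by (rule vdeg_vadd_vsmult[OF palindrome_mat_tr[OF CSCA] assms(2) vpalindrome_orbit
        orbit_nonzero[OF assms(1)] vpalindrome_orbit assms(3)])

lemma vdeg_orbit_backward:
  assumes "v \<noteq> ({}, {})" "mat_tr a \<noteq> {}"
    and "vdeg ((mat_apply a ^^ Suc (Suc t)) v) < pdeg (mat_tr a) + vdeg ((mat_apply a ^^ Suc t) v)"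
  shows "vdeg ((mat_apply a ^^ t) v) = pdeg (mat_tr a) + vdeg ((mat_apply a ^^ Suc t) v)"
  by (subst orbit_recurrence_backward)
    (rule vdeg_vadd_vsmult[OF palindrome_mat_tr[OF CSCA] assms(2) vpalindrome_orbit
        orbit_nonzero[OF assms(1)] vpalindrome_orbit assms(3)])

end

section \<open>Growth of the degree sequence\<close>

lemma bounded_if_le_max_previous:
  fixes e :: "nat \<Rightarrow> nat"
  assumes "\<And>t. e (Suc (Suc t)) \<le> max (e (Suc t)) (e t)"
  shows "e t \<le> max (e 0) (e 1)"
proof -
  have "e t \<le> max (e 0) (e 1) \<and> e (Suc t) \<le> max (e 0) (e 1)"
  proof (induction t)
    case (Suc t)
    then have "max (e (Suc t)) (e t) \<le> max (e 0) (e 1)" by simp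
    then show ?case using Suc order_trans[OF assms[of t]] by simp
  qed simp
  then show ?thesis ..
qed

text \<open>Read backwards, a sequence that never increases would decrease at every step.\<close>

lemma eventually_arithmetic_progression:
  fixes e :: "nat \<Rightarrow> nat"
  assumes "m > 0"
    and forward: "\<And>t. e t < m + e (Suc t) \<Longrightarrow> e (Suc (Suc t)) = m + e (Suc t)"
    and backward: "\<And>t. e (Suc (Suc t)) < m + e (Suc t) \<Longrightarrow> e t = m + e (Suc t)"
  shows "\<exists>T. \<forall>k. e (T + k) = e T + k * m"
proof -
  obtain T where T: "e T < e (Suc T)"
  proof (rule ccontr)
    assume "\<not> thesis"
    with that have nonincreasing: "e (Suc (Suc t)) \<le> e (Suc t)" for t by (meson not_less)
    have "e t = m + e (Suc t)" for t
      by (intro backward) (use nonincreasing[of t] \<open>m > 0\<close> in linarith)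
    then have decrease: "e (Suc t) < e t" for t using \<open>m > 0\<close> by (metis less_add_same_cancel2)
    have "e t + t \<le> e 0" for t
    proof (induction t)
      case (Suc t)
      then show ?case using decrease[of t] by simp
    qed simp
    from this[of "Suc (e 0)"] show False by simp
  qed
  have "e (Suc T + k) = e (Suc T) + k * m \<and> e (T + k) < e (Suc (T + k))" for k
  proof (induction k)
    case (Suc k)
    then have "e (Suc (Suc (T + k))) = m + e (Suc (T + k))"
      using forward[of "T + k"] by simp
    then show ?case using Suc.IH \<open>m > 0\<close> by simp
  qed (simp add: T)
  then show ?thesis by (intro exI[of _ "Suc T"]) blast
qed

lemma tendsto_ratio_arithmetic_progression:
  fixes e :: "nat \<Rightarrow> nat"
  assumes "\<And>k. e (T + k) = e T + k * m"
  shows "(\<lambda>t. real (e t) / real t) \<longlonglongrightarrow> real m"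
proof -
  define c where "c = real (e T) - real T * real m"
  have "\<forall>\<^sub>F t in sequentially. real m + c / real t = real (e t) / real t"
  proof (rule eventually_sequentiallyI[where c = "Suc T"])
    fix t assume t: "Suc T \<le> t"
    then obtain k where k: "t = T + k" using le_Suc_ex[OF Suc_leD] by blast
    have "real (e t) = real (e T) + real k * real m" using assms[of k] k by simp
    also have "\<dots> = real m * real t + c" using k by (simp add: c_def algebra_simps)
    finally show "real m + c / real t = real (e t) / real t" using t by (simp add: field_simps)
  qed
  moreover have "(\<lambda>t. real m + c / real t) \<longlonglongrightarrow> real m"
    using tendsto_add[OF tendsto_const lim_const_over_n] by simp
  ultimately show ?thesis by (rule Lim_transform_eventually[rotated])
qed

lemma tendsto_ratio_bounded:
  fixes e :: "nat \<Rightarrow> nat"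
  assumes "\<And>t. e t \<le> C"
  shows "(\<lambda>t. real (e t) / real t) \<longlonglongrightarrow> 0"
proof (rule tendsto_sandwich[where f = "\<lambda>_. 0" and h = "\<lambda>t. real C / real t"])
  show "\<forall>\<^sub>F t in sequentially. real (e t) / real t \<le> real C / real t"
    using assms by (auto intro!: always_eventually divide_right_mono)
qed (auto intro: lim_const_over_n)

theorem mainTheorem16:
  fixes a :: lmat and xi :: "lpoly \<times> lpoly"
  assumes "CSCA a"
    and "palindrome (fst xi)" and "palindrome (snd xi)"
    and "lp_gcd_one (fst xi) (snd xi)"
  shows "(\<lambda>t::nat. real (vdeg ((mat_apply a ^^ t) xi)) / real t)
           \<longlonglongrightarrow> real (pdeg (mat_tr a))"
proof -
  define e where "e t = vdeg ((mat_apply a ^^ t) xi)" for t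
  define m where "m = pdeg (mat_tr a)"
  have pal: "vpalindrome xi" using assms(2,3) by (simp add: vpalindrome_def)
  have nonzero: "xi \<noteq> ({}, {})" using assms(4) not_lp_gcd_one_empty by auto
  have "(\<lambda>t. real (e t) / real t) \<longlonglongrightarrow> real m"
  proof (cases "m = 0")
    case True
    then have "e t \<le> max (e 0) (e 1)" for t
      using vdeg_orbit_le[OF assms(1) pal]
      by (intro bounded_if_le_max_previous) (simp add: e_def m_def)
    then have "(\<lambda>t. real (e t) / real t) \<longlonglongrightarrow> 0" by (rule tendsto_ratio_bounded)
    with True show ?thesis by simp
  next
    case False
    then have "mat_tr a \<noteq> {}" by (auto simp: m_def)
    then have "\<exists>T. \<forall>k. e (T + k) = e T + k * m"
      using False vdeg_orbit_forward[OF assms(1) pal nonzero]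
        vdeg_orbit_backward[OF assms(1) pal nonzero]
      by (intro eventually_arithmetic_progression) (simp_all add: e_def m_def)
    then show ?thesis using tendsto_ratio_arithmetic_progression by blast
  qed
  then show ?thesis by (simp add: e_def m_def)
qed

end
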